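(* For every $n\in\mathbb{N}$, the number of maximal sum-free sets in the elementary abelian group $\mathbb{Z}_3^n$ (of order $3^n$) is $3^n-1$.
   Context: A non-empty subset $S$ of a group $G$ is called sum-free if for all $s_1,s_2\in S$ (including the case $s_1=s_2$) one has $s_1s_2\notin S$. A maximal sum-free set in a finite group $G$ means a sum-free set of largest possible cardinality among all sum-free sets in $G$ (maximal by cardinality). *)

theory Defs
  imports "HOL-Algebra.Group"
begin

definition sum_free :: "('a, 'b) monoid_scheme \<Rightarrow> 'a set \<Rightarrow> bool" where
  "sum_free G S \<longleftrightarrow> S \<noteq> {} \<and> S \<subseteq> carrier G \<and>
     (\<forall>s1\<in>S. \<forall>s2\<in>S. s1 \<otimes>\<^bsub>G\<^esub> s2 \<notin> S)"

definition max_sum_free :: "('a, 'b) monoid_scheme \<Rightarrow> 'a set \<Rightarrow> bool" where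
  "max_sum_free G S \<longleftrightarrow> sum_free G S \<and> (\<forall>T. sum_free G T \<longrightarrow> card T \<le> card S)"

definition Z3n :: "nat \<Rightarrow> (nat \<Rightarrow> int) monoid" where
  "Z3n n = \<lparr> carrier = {v. (\<forall>i<n. v i \<in> {0,1,2}) \<and> (\<forall>i\<ge>n. v i = 0)},
             mult = (\<lambda>v w i. (v i + w i) mod 3),
             one = (\<lambda>i. 0) \<rparr>"

end

theory Submission
  imports Defs "HOL-Algebra.Elementary_Groups"
begin

(* In a group of exponent 3, a sum-free set S and any a in S give three pairwise disjoint
   translates S, Sa, Sa^-1, so 3|S| <= |G|. If equality holds they partition G, and in the
   abelian case this forces the function that is 1 on S, 2 on S^-1 and 0 elsewhere to be a
   homomorphism onto Z/3, whose fibre over 1 is S. Conversely the fibre over 1 of any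
   homomorphism onto Z/3 is sum-free of size |G|/3. The homomorphisms Z_3^n -> Z/3 are the
   maps x |-> u.x, and distinct u <> 0 have distinct fibres over 1, which gives 3^n - 1
   largest sum-free sets. *)

locale exponent3_group = group G for G (structure) +
  assumes finite_carrier: "finite (carrier G)"
    and pow3_eq_one: "x \<in> carrier G \<Longrightarrow> x [^] (3::nat) = \<one>"
begin

lemma inv_eq_square:
  assumes "x \<in> carrier G"
  shows "inv x = x \<otimes> x"
proof (rule inv_equality)
  show "x \<otimes> x \<otimes> x = \<one>"
    using pow3_eq_one[OF assms] assms by (simp add: numeral_3_eq_3 nat_pow_Suc)
qed (use assms in simp_all)

lemma square_inv: "x \<in> carrier G \<Longrightarrow> inv x \<otimes> inv x = x"
  by (metis inv_closed inv_eq_square inv_inv)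

lemma sum_free_rcosets_disjoint:
  assumes sf: "sum_free G S" and a: "a \<in> S"
  shows "S \<inter> (S #> a) = {}" "S \<inter> (S #> inv a) = {}" "(S #> a) \<inter> (S #> inv a) = {}"
proof -
  have SG: "S \<subseteq> carrier G" and free: "\<And>s t. s \<in> S \<Longrightarrow> t \<in> S \<Longrightarrow> s \<otimes> t \<notin> S"
    using sf by (auto simp: sum_free_def)
  have aG: "a \<in> carrier G" using SG a by blast
  show "S \<inter> (S #> a) = {}"
    using free a by (auto simp: r_coset_def)
  show "S \<inter> (S #> inv a) = {}"
  proof (rule ccontr)
    assume "S \<inter> (S #> inv a) \<noteq> {}"
    then obtain s where s: "s \<in> S" and sa: "s \<otimes> inv a \<in> S" by (auto simp: r_coset_def)
    have "s \<otimes> inv a \<otimes> a = s" using s SG aG by (simp add: m_assoc subsetD)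
    then show False using free[OF sa a] s by simp
  qed
  show "(S #> a) \<inter> (S #> inv a) = {}"
  proof (rule ccontr)
    assume "(S #> a) \<inter> (S #> inv a) \<noteq> {}"
    then obtain s t where s: "s \<in> S" and t: "t \<in> S" and eq: "s \<otimes> a = t \<otimes> inv a"
      by (auto simp: r_coset_def)
    have sG: "s \<in> carrier G" and tG: "t \<in> carrier G" using s t SG by auto
    have "s = t \<otimes> inv a \<otimes> inv a"
      using eq[symmetric] sG aG by (simp add: m_assoc)
    also have "\<dots> = t \<otimes> a" using tG aG by (simp add: m_assoc square_inv)
    finally show False using free[OF t a] s by simp
  qed
qed

lemma sum_free_translates_subset:
  assumes sf: "sum_free G S" and a: "a \<in> S"
  shows "S \<union> (S #> a) \<union> (S #> inv a) \<subseteq> carrier G"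
proof -
  have SG: "S \<subseteq> carrier G" using sf by (simp add: sum_free_def)
  then have "a \<in> carrier G" using a by blast
  then show ?thesis using SG by (simp add: r_coset_subset_G)
qed

lemma card_sum_free_translates:
  assumes sf: "sum_free G S" and a: "a \<in> S"
  shows "card (S \<union> (S #> a) \<union> (S #> inv a)) = 3 * card S"
proof -
  have SG: "S \<subseteq> carrier G" using sf by (simp add: sum_free_def)
  have aG: "a \<in> carrier G" using SG a by blast
  have fin: "finite T" if "T \<subseteq> carrier G" for T
    using finite_subset[OF that finite_carrier] .
  have card_a: "card (S #> a) = card S" and card_inv: "card (S #> inv a) = card S"
    using card_rcosets_equal[OF rcosetsI[OF SG] SG] aG by (metis inv_closed)+
  have fin_a: "finite (S #> a)" and fin_inv: "finite (S #> inv a)"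
    using SG aG by (simp_all add: fin r_coset_subset_G)
  note disj = sum_free_rcosets_disjoint[OF sf a]
  have "card (S \<union> (S #> a) \<union> (S #> inv a)) = card (S \<union> (S #> a)) + card (S #> inv a)"
    by (rule card_Un_disjoint) (use fin[OF SG] fin_a fin_inv disj in auto)
  also have "card (S \<union> (S #> a)) = card S + card (S #> a)"
    by (rule card_Un_disjoint) (use fin[OF SG] fin_a disj in auto)
  finally show ?thesis using card_a card_inv by simp
qed

lemma card_sum_free_le:
  assumes sf: "sum_free G S"
  shows "3 * card S \<le> order G"
proof -
  obtain a where a: "a \<in> S" using sf by (auto simp: sum_free_def)
  show ?thesis
    using card_mono[OF finite_carrier sum_free_translates_subset[OF sf a]]
      card_sum_free_translates[OF sf a] by (simp add: order_def)
qed

lemma largest_sum_free_translates_cover: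
  assumes sf: "sum_free G S" and card_S: "3 * card S = order G" and a: "a \<in> S"
  shows "S \<union> (S #> a) \<union> (S #> inv a) = carrier G"
  using card_subset_eq[OF finite_carrier sum_free_translates_subset[OF sf a]]
    card_sum_free_translates[OF sf a] card_S by (simp add: order_def)

lemma max_sum_free_iff:
  assumes T: "sum_free G T" "3 * card T = order G"
  shows "max_sum_free G S \<longleftrightarrow> sum_free G S \<and> 3 * card S = order G"
proof
  assume "max_sum_free G S"
  then have "sum_free G S" "card T \<le> card S" using T by (auto simp: max_sum_free_def)
  then show "sum_free G S \<and> 3 * card S = order G"
    using card_sum_free_le[of S] T by simp
next
  assume S: "sum_free G S \<and> 3 * card S = order G"
  have "card U \<le> card S" if "sum_free G U" for U
    using card_sum_free_le[OF that] S by simp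
  then show "max_sum_free G S"
    using S by (simp add: max_sum_free_def)
qed

lemma level_set_largest_sum_free:
  assumes f: "f \<in> hom G (integer_mod_group 3)"
    and d: "d \<in> carrier G" "f d = 1"
  defines "L \<equiv> {x \<in> carrier G. f x = 1}"
  shows "sum_free G L" and "3 * card L = order G"
proof -
  have f_mult: "f (x \<otimes> y) = (f x + f y) mod 3" if "x \<in> carrier G" "y \<in> carrier G" for x y
    using hom_mult[OF f that] by simp
  have f_range: "f x \<in> {0, 1, 2}" if "x \<in> carrier G" for x
    using hom_in_carrier[OF f that] by (auto simp: carrier_integer_mod_group)
  have dL: "d \<in> L" using d by (simp add: L_def)
  show sf: "sum_free G L"
    unfolding sum_free_def using dL by (auto simp: L_def f_mult)
  have f_inv_d: "f (inv d) = 2"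
    using f_mult[OF d(1) d(1)] d by (simp add: inv_eq_square)
  have "carrier G \<subseteq> L \<union> (L #> d) \<union> (L #> inv d)"
  proof
    fix x assume x: "x \<in> carrier G"
    consider "f x = 0" | "f x = 1" | "f x = 2" using f_range[OF x] by blast
    then show "x \<in> L \<union> (L #> d) \<union> (L #> inv d)"
    proof cases
      case 1
      then have "x \<otimes> d \<in> L" using x d by (simp add: L_def f_mult)
      moreover have "x = x \<otimes> d \<otimes> inv d" using x d by (simp add: m_assoc)
      ultimately show ?thesis unfolding r_coset_def by blast
    next
      case 2
      then show ?thesis using x by (simp add: L_def)
    next
      case 3
      then have "x \<otimes> inv d \<in> L" using x d f_inv_d by (simp add: L_def f_mult)
      moreover have "x = x \<otimes> inv d \<otimes> d" using x d by (simp add: m_assoc)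
      ultimately show ?thesis unfolding r_coset_def by blast
    qed
  qed
  then have "L \<union> (L #> d) \<union> (L #> inv d) = carrier G"
    using sum_free_translates_subset[OF sf dL] by blast
  then show "3 * card L = order G"
    using card_sum_free_translates[OF sf dL] by (simp add: order_def)
qed

end

locale exponent3_comm_group = exponent3_group G + comm_group G for G (structure)

definition sum_free_char :: "('a, 'b) monoid_scheme \<Rightarrow> 'a set \<Rightarrow> 'a \<Rightarrow> int" where
  "sum_free_char G S x = (if x \<in> S then 1 else if inv\<^bsub>G\<^esub> x \<in> S then 2 else 0)"

locale largest_sum_free = exponent3_comm_group +
  fixes S
  assumes sum_free_S: "sum_free G S" and card_S: "3 * card S = order G"
begin

abbreviation \<chi> where "\<chi> \<equiv> sum_free_char G S"

lemma S_subset: "S \<subseteq> carrier G"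
  using sum_free_S by (simp add: sum_free_def)

lemma mult_not_mem: "a \<in> S \<Longrightarrow> b \<in> S \<Longrightarrow> a \<otimes> b \<notin> S"
  using sum_free_S by (simp add: sum_free_def)

lemma inv_not_mem: "a \<in> S \<Longrightarrow> inv a \<notin> S"
  using mult_not_mem[of "inv a" "inv a"] S_subset by (auto simp: square_inv)

lemma translates_cover:
  assumes "a \<in> S" "x \<in> carrier G"
  obtains "x \<in> S" | s where "s \<in> S" "x = s \<otimes> a" | s where "s \<in> S" "x = s \<otimes> inv a"
  using largest_sum_free_translates_cover[OF sum_free_S card_S assms(1)] assms(2)
  unfolding r_coset_def by blast

lemma inv_mult_mem:
  assumes a: "a \<in> S" and b: "b \<in> S"
  shows "inv (a \<otimes> b) \<in> S"
proof -
  have aG: "a \<in> carrier G" and bG: "b \<in> carrier G" using a b S_subset by auto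
  show ?thesis
  proof (cases rule: translates_cover[OF a inv_closed[OF bG]])
    case 1
    then show ?thesis using inv_not_mem[OF b] by simp
  next
    case (2 c)
    then have "c = inv b \<otimes> inv a"
      using aG S_subset by (simp add: m_assoc subsetD)
    then show ?thesis using 2 aG bG by (simp add: inv_mult_group)
  next
    case (3 c)
    then have "inv b \<otimes> a = c"
      using aG S_subset by (simp add: m_assoc subsetD)
    then have "b \<otimes> c = a"
      using aG bG by (auto simp: m_assoc[symmetric])
    then show ?thesis using mult_not_mem[OF b \<open>c \<in> S\<close>] a by simp
  qed
qed

lemma neutral_mult_mem:
  assumes a: "a \<in> S" and y: "y \<in> carrier G" "y \<notin> S" "inv y \<notin> S"
  shows "y \<otimes> a \<in> S"
proof (cases rule: translates_cover[OF a y(1)])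
  case 1
  then show ?thesis using y by simp
next
  case (2 s)
  then show ?thesis using inv_mult_mem[OF \<open>s \<in> S\<close> a] y by simp
next
  case (3 s)
  then have "y \<otimes> a = s" using a S_subset by (simp add: m_assoc subsetD)
  then show ?thesis using \<open>s \<in> S\<close> by simp
qed

lemma char_range: "\<chi> x \<in> {0, 1, 2}"
  by (simp add: sum_free_char_def)

lemma char_mult_mem:
  assumes x: "x \<in> carrier G" and a: "a \<in> S"
  shows "\<chi> (x \<otimes> a) = (\<chi> x + 1) mod 3"
proof -
  have aG: "a \<in> carrier G" using a S_subset by auto
  consider "x \<in> S" | "x \<notin> S" "inv x \<in> S" | "x \<notin> S" "inv x \<notin> S" by blast
  then show ?thesis
  proof cases
    case 1
    then show ?thesis
      using mult_not_mem[OF 1 a] inv_mult_mem[OF 1 a] by (simp add: sum_free_char_def)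
  next
    case 2
    have "x \<otimes> a \<notin> S"
    proof
      assume "x \<otimes> a \<in> S"
      then have "inv x \<otimes> (x \<otimes> a) \<notin> S" using mult_not_mem 2 by blast
      then show False using x aG a by (simp add: m_assoc[symmetric])
    qed
    moreover have "inv (x \<otimes> a) \<notin> S"
    proof
      assume "inv (x \<otimes> a) \<in> S"
      then have "a \<otimes> inv (x \<otimes> a) \<notin> S" using mult_not_mem a by blast
      moreover have "a \<otimes> inv (x \<otimes> a) = inv x"
        using x aG by (simp add: inv_mult m_lcomm[of a "inv x"])
      ultimately show False using 2 by simp
    qed
    ultimately show ?thesis using 2 by (simp add: sum_free_char_def)
  next
    case 3
    then show ?thesis
      using neutral_mult_mem[OF a x] by (simp add: sum_free_char_def)
  qed
qed

lemma sum_free_char_hom: "\<chi> \<in> hom G (integer_mod_group 3)"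
proof (rule homI)
  fix x assume "x \<in> carrier G"
  show "\<chi> x \<in> carrier (integer_mod_group 3)"
    using char_range[of x] by (auto simp: carrier_integer_mod_group)
next
  fix x y assume x: "x \<in> carrier G" and y: "y \<in> carrier G"
  have xy: "x \<otimes> y \<in> carrier G" using x y by simp
  consider "y \<in> S" | "y \<notin> S" "inv y \<in> S" | "y \<notin> S" "inv y \<notin> S" by blast
  then have "\<chi> (x \<otimes> y) = (\<chi> x + \<chi> y) mod 3"
  proof cases
    case 1
    then show ?thesis using char_mult_mem[OF x 1] by (simp add: sum_free_char_def)
  next
    case 2
    have "\<chi> x = \<chi> (x \<otimes> y \<otimes> inv y)" using x y by (simp add: m_assoc)
    also have "\<dots> = (\<chi> (x \<otimes> y) + 1) mod 3" using char_mult_mem[OF xy 2(2)] .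
    finally have "\<chi> x = (\<chi> (x \<otimes> y) + 1) mod 3" .
    moreover have "\<chi> y = 2" using 2 by (simp add: sum_free_char_def)
    ultimately show ?thesis using char_range[of x] char_range[of "x \<otimes> y"] by auto
  next
    case 3
    obtain a where a: "a \<in> S" using sum_free_S by (auto simp: sum_free_def)
    have "(\<chi> (x \<otimes> y) + 1) mod 3 = \<chi> (x \<otimes> (y \<otimes> a))"
      using char_mult_mem[OF xy a] x y a S_subset by (simp add: m_assoc subsetD)
    also have "\<dots> = (\<chi> x + 1) mod 3" using char_mult_mem[OF x neutral_mult_mem[OF a y 3]] .
    finally have "(\<chi> (x \<otimes> y) + 1) mod 3 = (\<chi> x + 1) mod 3" .
    moreover have "\<chi> y = 0" using 3 by (simp add: sum_free_char_def)
    ultimately show ?thesis using char_range[of x] char_range[of "x \<otimes> y"] by auto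
  qed
  then show "\<chi> (x \<otimes> y) = \<chi> x \<otimes>\<^bsub>integer_mod_group 3\<^esub> \<chi> y" by simp
qed

lemma eq_level_set: "S = {x \<in> carrier G. \<chi> x = 1}"
  using S_subset by (auto simp: sum_free_char_def)

end

lemma Z3n_carrier_iff:
  "x \<in> carrier (Z3n n) \<longleftrightarrow> (\<forall>i<n. x i \<in> {0, 1, 2}) \<and> (\<forall>i\<ge>n. x i = 0)"
  by (simp add: Z3n_def)

lemma Z3n_mult [simp]: "x \<otimes>\<^bsub>Z3n n\<^esub> y = (\<lambda>i. (x i + y i) mod 3)"
  by (simp add: Z3n_def)

lemma Z3n_one [simp]: "\<one>\<^bsub>Z3n n\<^esub> = (\<lambda>i. 0)"
  by (simp add: Z3n_def)

lemma Z3n_entry_bounds: "x \<in> carrier (Z3n n) \<Longrightarrow> 0 \<le> x i \<and> x i < 3"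
  by (cases "i < n") (auto simp: Z3n_carrier_iff)

lemma Z3n_entry_mod: "x \<in> carrier (Z3n n) \<Longrightarrow> x i mod 3 = x i"
  using Z3n_entry_bounds by simp

lemma Z3n_mod_in_carrier:
  "(\<forall>i\<ge>n. x i mod 3 = 0) \<Longrightarrow> (\<lambda>i. x i mod 3) \<in> carrier (Z3n n)"
  unfolding Z3n_carrier_iff by auto

lemma Z3n_comm_group: "comm_group (Z3n n)"
proof (rule comm_groupI)
  fix x y z
  assume x: "x \<in> carrier (Z3n n)" and y: "y \<in> carrier (Z3n n)" and "z \<in> carrier (Z3n n)"
  show "x \<otimes>\<^bsub>Z3n n\<^esub> y \<in> carrier (Z3n n)"
    using x y by (auto intro: Z3n_mod_in_carrier simp: Z3n_carrier_iff)
  show "x \<otimes>\<^bsub>Z3n n\<^esub> y \<otimes>\<^bsub>Z3n n\<^esub> z = x \<otimes>\<^bsub>Z3n n\<^esub> (y \<otimes>\<^bsub>Z3n n\<^esub> z)"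
    by (simp add: mod_add_left_eq mod_add_right_eq add.assoc)
  show "x \<otimes>\<^bsub>Z3n n\<^esub> y = y \<otimes>\<^bsub>Z3n n\<^esub> x"
    by (simp add: add.commute)
  show "\<one>\<^bsub>Z3n n\<^esub> \<otimes>\<^bsub>Z3n n\<^esub> x = x"
    using x by (simp add: Z3n_entry_mod)
  show "\<exists>y\<in>carrier (Z3n n). y \<otimes>\<^bsub>Z3n n\<^esub> x = \<one>\<^bsub>Z3n n\<^esub>"
  proof
    show "(\<lambda>i. (- x i) mod 3) \<in> carrier (Z3n n)"
      using x by (intro Z3n_mod_in_carrier) (simp add: Z3n_carrier_iff)
  qed (simp add: mod_add_left_eq)
qed (simp add: Z3n_carrier_iff)

lemma Z3n_pow: "x [^]\<^bsub>Z3n n\<^esub> (k::nat) = (\<lambda>i. (int k * x i) mod 3)"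
  by (induction k) (simp_all add: mod_add_left_eq mod_add_right_eq distrib_right add.commute)

lemma card_carrier_Z3n: "card (carrier (Z3n n)) = 3 ^ n"
proof -
  have "bij_betw (\<lambda>x. restrict x {..<n}) (carrier (Z3n n)) ({..<n} \<rightarrow>\<^sub>E {0, 1, 2::int})"
  proof (rule bij_betw_imageI)
    show "inj_on (\<lambda>x. restrict x {..<n}) (carrier (Z3n n))"
      by (rule inj_onI) (metis Z3n_carrier_iff ext lessThan_iff not_le restrict_apply')
    show "(\<lambda>x. restrict x {..<n}) ` carrier (Z3n n) = {..<n} \<rightarrow>\<^sub>E {0, 1, 2}"
    proof
      show "(\<lambda>x. restrict x {..<n}) ` carrier (Z3n n) \<subseteq> {..<n} \<rightarrow>\<^sub>E {0, 1, 2}"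
        by (rule image_subsetI) (simp add: Z3n_carrier_iff)
      show "{..<n} \<rightarrow>\<^sub>E {0, 1, 2} \<subseteq> (\<lambda>x. restrict x {..<n}) ` carrier (Z3n n)"
      proof
        fix g assume g: "g \<in> {..<n} \<rightarrow>\<^sub>E {0, 1, 2::int}"
        let ?x = "\<lambda>i. if i < n then g i else 0"
        have "?x \<in> carrier (Z3n n)"
          using g by (auto simp: Z3n_carrier_iff)
        moreover have "g = restrict ?x {..<n}"
          using g by (auto simp: PiE_def extensional_def)
        ultimately show "g \<in> (\<lambda>x. restrict x {..<n}) ` carrier (Z3n n)" by blast
      qed
    qed
  qed
  then show ?thesis
    by (simp add: bij_betw_same_card card_PiE numeral_3_eq_3)
qed

lemma order_Z3n: "order (Z3n n) = 3 ^ n"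
  by (simp add: order_def card_carrier_Z3n)

lemma finite_carrier_Z3n: "finite (carrier (Z3n n))"
  using card_carrier_Z3n by (metis card.infinite power_not_zero zero_neq_numeral)

interpretation Z3n: exponent3_comm_group "Z3n n"
proof -
  interpret comm_group "Z3n n" by (rule Z3n_comm_group)
  show "exponent3_comm_group (Z3n n)"
    by unfold_locales (simp_all add: finite_carrier_Z3n Z3n_pow)
qed

definition unit_vec :: "nat \<Rightarrow> nat \<Rightarrow> int" where
  "unit_vec j = (\<lambda>i. if i = j then 1 else 0)"

lemma unit_vec_in_carrier: "j < n \<Longrightarrow> unit_vec j \<in> carrier (Z3n n)"
  by (auto simp: Z3n_carrier_iff unit_vec_def)

definition dot3 :: "nat \<Rightarrow> (nat \<Rightarrow> int) \<Rightarrow> (nat \<Rightarrow> int) \<Rightarrow> int" where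
  "dot3 n u x = (\<Sum>i<n. u i * x i) mod 3"

definition hyperplane :: "nat \<Rightarrow> (nat \<Rightarrow> int) \<Rightarrow> (nat \<Rightarrow> int) set" where
  "hyperplane n u = {x \<in> carrier (Z3n n). dot3 n u x = 1}"

lemma single_in_carrier_Z3n:
  "j < n \<Longrightarrow> c \<in> {0, 1, 2} \<Longrightarrow> (\<lambda>i. if i = j then c else 0) \<in> carrier (Z3n n)"
  by (auto simp: Z3n_carrier_iff)

lemma dot3_single: "j < n \<Longrightarrow> dot3 n u (\<lambda>i. if i = j then c else 0) = (u j * c) mod 3"
  by (simp add: dot3_def if_distrib sum.delta cong: if_cong)

lemma dot3_hom: "dot3 n u \<in> hom (Z3n n) (integer_mod_group 3)"
proof (rule homI)
  fix x show "dot3 n u x \<in> carrier (integer_mod_group 3)"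
    by (simp add: dot3_def carrier_integer_mod_group)
next
  fix x y
  have "dot3 n u (x \<otimes>\<^bsub>Z3n n\<^esub> y) = (\<Sum>i<n. u i * ((x i + y i) mod 3)) mod 3"
    by (simp add: dot3_def)
  also have "\<dots> = (\<Sum>i<n. u i * ((x i + y i) mod 3) mod 3) mod 3"
    by (simp only: mod_sum_eq)
  also have "\<dots> = (\<Sum>i<n. u i * (x i + y i) mod 3) mod 3"
    by (simp only: mod_mult_right_eq)
  also have "\<dots> = (\<Sum>i<n. u i * (x i + y i)) mod 3"
    by (simp only: mod_sum_eq)
  also have "\<dots> = (dot3 n u x + dot3 n u y) mod 3"
    by (simp add: dot3_def distrib_left sum.distrib mod_add_eq)
  finally show "dot3 n u (x \<otimes>\<^bsub>Z3n n\<^esub> y) = dot3 n u x \<otimes>\<^bsub>integer_mod_group 3\<^esub> dot3 n u y"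
    by simp
qed

lemma hom_Z3n_on_support:
  assumes f: "f \<in> hom (Z3n n) (integer_mod_group 3)"
  shows "m \<le> n \<Longrightarrow> x \<in> carrier (Z3n n) \<Longrightarrow> \<forall>i\<ge>m. x i = 0 \<Longrightarrow>
    f x = (\<Sum>i<m. x i * f (unit_vec i)) mod 3"
proof (induction m arbitrary: x)
  case 0
  then have "x = \<one>\<^bsub>Z3n n\<^esub>" by auto
  then show ?case
    using hom_one[OF f Z3n.is_group group_integer_mod_group] by simp
next
  case (Suc m)
  let ?y = "x(m := 0)" and ?z = "unit_vec m [^]\<^bsub>Z3n n\<^esub> nat (x m)"
  have m: "m < n" using Suc.prems(1) by simp
  have e: "unit_vec m \<in> carrier (Z3n n)" using unit_vec_in_carrier[OF m] .
  have xm: "int (nat (x m)) = x m" using Z3n_entry_bounds[OF Suc.prems(2)] by simp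
  have y: "?y \<in> carrier (Z3n n)" using Suc.prems(2) by (auto simp: Z3n_carrier_iff)
  have z: "?z \<in> carrier (Z3n n)" using e by simp
  have "x = ?y \<otimes>\<^bsub>Z3n n\<^esub> ?z"
    using Z3n_entry_mod[OF Suc.prems(2)] xm by (auto simp: Z3n_pow unit_vec_def)
  then have "f x = f ?y \<otimes>\<^bsub>integer_mod_group 3\<^esub> f ?z"
    using hom_mult[OF f y z] by simp
  also have "f ?z = x m * f (unit_vec m) mod 3"
    using hom_nat_pow[OF f e Z3n.is_group group_integer_mod_group] xm by simp
  also have "f ?y = (\<Sum>i<m. ?y i * f (unit_vec i)) mod 3"
    by (rule Suc.IH[OF _ y]) (use Suc.prems in auto)
  also have "(\<Sum>i<m. ?y i * f (unit_vec i)) = (\<Sum>i<m. x i * f (unit_vec i))"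
    by (rule sum.cong) auto
  finally show ?case by (simp add: mod_add_eq)
qed

lemma hom_Z3n_eq_dot3:
  assumes f: "f \<in> hom (Z3n n) (integer_mod_group 3)"
  obtains u where "u \<in> carrier (Z3n n)" "\<And>x. x \<in> carrier (Z3n n) \<Longrightarrow> f x = dot3 n u x"
proof
  let ?u = "\<lambda>i. if i < n then f (unit_vec i) else 0"
  show "?u \<in> carrier (Z3n n)"
  proof -
    have "f (unit_vec i) \<in> {0, 1, 2}" if "i < n" for i
      using hom_in_carrier[OF f unit_vec_in_carrier[OF that]]
      by (auto simp: carrier_integer_mod_group)
    then show ?thesis by (auto simp: Z3n_carrier_iff)
  qed
  fix x assume "x \<in> carrier (Z3n n)"
  then have "f x = (\<Sum>i<n. x i * f (unit_vec i)) mod 3"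
    using hom_Z3n_on_support[OF f] by (simp add: Z3n_carrier_iff)
  then show "f x = dot3 n ?u x"
    by (simp add: dot3_def mult.commute)
qed

lemma hyperplane_inj:
  assumes u: "u \<in> carrier (Z3n n)" and v: "v \<in> carrier (Z3n n)"
    and eq: "hyperplane n u = hyperplane n v"
  shows "u = v"
proof
  fix j show "u j = v j"
  proof (cases "j < n")
    case False
    then show ?thesis using u v by (simp add: Z3n_carrier_iff)
  next
    case True
    have mem: "(\<lambda>i. if i = j then c else 0) \<in> hyperplane n w \<longleftrightarrow> (w j * c) mod 3 = 1"
      if "c \<in> {1, 2}" for c w
      using dot3_single[OF True] single_in_carrier_Z3n[OF True] that by (auto simp: hyperplane_def)
    have "u j mod 3 = 1 \<longleftrightarrow> v j mod 3 = 1" "(u j * 2) mod 3 = 1 \<longleftrightarrow> (v j * 2) mod 3 = 1"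
      using mem[of 1 u] mem[of 1 v] mem[of 2 u] mem[of 2 v] eq by simp_all
    moreover have "u j \<in> {0, 1, 2}" "v j \<in> {0, 1, 2}"
      using u v True by (auto simp: Z3n_carrier_iff)
    ultimately show ?thesis by auto
  qed
qed

lemma dot3_attains_one:
  assumes u: "u \<in> carrier (Z3n n)" "u \<noteq> \<one>\<^bsub>Z3n n\<^esub>"
  obtains d where "d \<in> carrier (Z3n n)" "dot3 n u d = 1"
proof -
  obtain j where j: "j < n" "u j \<noteq> 0"
    using u by (auto simp: Z3n_carrier_iff fun_eq_iff) (meson not_le)
  then have uj: "u j \<in> {1, 2}" using u by (auto simp: Z3n_carrier_iff)
  show ?thesis
  proof
    show "(\<lambda>i. if i = j then u j else 0) \<in> carrier (Z3n n)"
      using single_in_carrier_Z3n[OF j(1)] uj by auto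
    show "dot3 n u (\<lambda>i. if i = j then u j else 0) = 1"
      using dot3_single[OF j(1)] uj by auto
  qed
qed

lemma largest_sum_free_Z3n_iff:
  "sum_free (Z3n n) S \<and> 3 * card S = 3 ^ n \<longleftrightarrow>
     S \<in> hyperplane n ` (carrier (Z3n n) - {\<one>\<^bsub>Z3n n\<^esub>})"
proof
  assume "sum_free (Z3n n) S \<and> 3 * card S = 3 ^ n"
  then interpret largest_sum_free "Z3n n" S
    by unfold_locales (simp_all add: order_Z3n)
  obtain u where u: "u \<in> carrier (Z3n n)" and \<chi>_eq: "\<And>x. x \<in> carrier (Z3n n) \<Longrightarrow> \<chi> x = dot3 n u x"
    using hom_Z3n_eq_dot3[OF sum_free_char_hom] by blast
  have "S = {x \<in> carrier (Z3n n). \<chi> x = 1}" by (rule eq_level_set)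
  also have "\<dots> = hyperplane n u" using \<chi>_eq by (auto simp: hyperplane_def)
  finally have S_eq: "S = hyperplane n u" .
  moreover have "u \<noteq> \<one>\<^bsub>Z3n n\<^esub>"
  proof
    assume "u = \<one>\<^bsub>Z3n n\<^esub>"
    then have "hyperplane n u = {}" by (simp add: hyperplane_def dot3_def)
    then show False using S_eq sum_free_S by (simp add: sum_free_def)
  qed
  ultimately show "S \<in> hyperplane n ` (carrier (Z3n n) - {\<one>\<^bsub>Z3n n\<^esub>})"
    using u by blast
next
  assume "S \<in> hyperplane n ` (carrier (Z3n n) - {\<one>\<^bsub>Z3n n\<^esub>})"
  then obtain u where u: "u \<in> carrier (Z3n n)" "u \<noteq> \<one>\<^bsub>Z3n n\<^esub>" and S: "S = hyperplane n u"
    by blast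
  obtain d where "d \<in> carrier (Z3n n)" "dot3 n u d = 1"
    using dot3_attains_one[OF u] .
  from Z3n.level_set_largest_sum_free[OF dot3_hom this]
  show "sum_free (Z3n n) S \<and> 3 * card S = 3 ^ n"
    by (simp add: S hyperplane_def order_Z3n)
qed

theorem mainTheorem2:
  fixes n :: nat
  assumes "n \<ge> 1"
  shows "card {S. max_sum_free (Z3n n) S} = 3 ^ n - 1"
proof -
  let ?H = "carrier (Z3n n) - {\<one>\<^bsub>Z3n n\<^esub>}"
  have "unit_vec 0 \<in> ?H"
    using assms unit_vec_in_carrier[of 0 n] by (auto simp: unit_vec_def fun_eq_iff)
  then have T: "sum_free (Z3n n) (hyperplane n (unit_vec 0))"
      "3 * card (hyperplane n (unit_vec 0)) = order (Z3n n)"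
    using largest_sum_free_Z3n_iff[of n "hyperplane n (unit_vec 0)"] by (simp_all add: order_Z3n)
  have "max_sum_free (Z3n n) S \<longleftrightarrow> S \<in> hyperplane n ` ?H" for S
    using Z3n.max_sum_free_iff[OF T] largest_sum_free_Z3n_iff by (simp add: order_Z3n)
  then have "{S. max_sum_free (Z3n n) S} = hyperplane n ` ?H" by blast
  moreover have "inj_on (hyperplane n) ?H"
    using hyperplane_inj by (meson DiffD1 inj_onI)
  ultimately show ?thesis
    using Z3n.one_closed[of n] by (simp add: card_image card_Diff_singleton card_carrier_Z3n)
qed

end
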